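(* Consider a finite set of users $\mathcal{I}$, a finite set of time periods $\mathcal{T}$, and a finite set of types $\mathcal{K}=\{1,\dots,K\}$. Each user $i$ has deterministic demand $D_i^t\ge 0$ in period $t$ and belongs to exactly one type $k\in\mathcal{K}$, in which case his value of lost load is $V_i^t=V_k^t$; assume $V_1^t\le V_2^t\le\cdots\le V_K^t$ for every $t$. Let $D_a^t=\sum_{i\in\mathcal{I}}D_i^t>0$. Fix a renewable capacity $r\ge 0$ and random variables $\Theta^t$ supported in $[0,1]$; let $s^t=\min(D_a^t, r\Theta^t)$ and $d_i^t=\frac{D_i^t}{D_a^t}s^t$. Fix a price $p$ with $p\le V_1^t$ for all $t$. A contract assigns to each type $k$ premium fees $(\pi_k^t)_{t\in\mathcal{T}}$; a user $i$ choosing contract item $o\in\mathcal{K}$ has cost $$CU_i(o)=\sum_{t}\pi_o^tD_i^t+\sum_t p\,\mathbb{E}[d_i^t]+\sum_t\mathbb{E}[V_i^t(D_i^t-d_i^t)]-\sum_t\mathbb{E}[(V_o^t-p)(D_i^t-d_i^t)],$$ and a user buying no insurance has cost $CU_i(0)=\sum_t p\,\mathbb{E}[d_i^t]+\sum_t\mathbb{E}[V_i^t(D_i^t-d_i^t)]$. Suppose the premium fees satisfy $$\pi_k^t-\pi_m^t=(V_k^t-V_m^t)\,\mathbb{E}\Big[1-\frac{s^t}{D_a^t}\Big]\quad\forall t\in\mathcal{T},\ \forall m,k\in\mathcal{K},$$ $$0\le \pi_k^t\le (V_k^t-p)\,\mathbb{E}\Big[1-\frac{s^t}{D_a^t}\Big]\quad\forall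 t\in\mathcal{T},\ \forall k\in\mathcal{K}.$$ Then the contract is valid: for every user $i$ of type $k$, $CU_i(k)\le CU_i(0)$ (individual rationality) and $CU_i(k)\le CU_i(m)$ for all $m\in\mathcal{K}$ (incentive compatibility). Moreover, premium fees satisfying both displayed conditions always exist.
   Context: A contract is called valid if it satisfies Individual Rationality (each user of type $k$ weakly prefers the type-$k$ contract item to not purchasing insurance, i.e. $CU_i(k)\le CU_i(0)$) and Incentive Compatibility (each user of type $k$ weakly prefers the type-$k$ item to any other item $m$, i.e. $CU_i(k)\le CU_i(m)$). The expectation is over $\Theta^t$. *)

theory Defs
  imports "HOL-Probability.Probability"
begin

text \<open>Users: finite set I of type 'i; periods: finite set T of type 't;
 types: {1..K}. D i t is the demand of user i in period t, tau i is the type of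
 user i, V k t the value of lost load of type k in period t.\<close>

definition Dagg :: "'i set \<Rightarrow> ('i \<Rightarrow> 't \<Rightarrow> real) \<Rightarrow> 't \<Rightarrow> real" where
  "Dagg I D t = (\<Sum>i\<in>I. D i t)"

definition renew_supply :: "'i set \<Rightarrow> ('i \<Rightarrow> 't \<Rightarrow> real) \<Rightarrow> real \<Rightarrow> ('t \<Rightarrow> 'w \<Rightarrow> real) \<Rightarrow> 't \<Rightarrow> 'w \<Rightarrow> real" where
  "renew_supply I D r Theta t w = min (Dagg I D t) (r * Theta t w)"

definition served :: "'i set \<Rightarrow> ('i \<Rightarrow> 't \<Rightarrow> real) \<Rightarrow> real \<Rightarrow> ('t \<Rightarrow> 'w \<Rightarrow> real) \<Rightarrow> 'i \<Rightarrow> 't \<Rightarrow> 'w \<Rightarrow> real" where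
  "served I D r Theta i t w = D i t / Dagg I D t * renew_supply I D r Theta t w"

definition CU :: "'w measure \<Rightarrow> 'i set \<Rightarrow> 't set \<Rightarrow> ('i \<Rightarrow> 't \<Rightarrow> real) \<Rightarrow> ('i \<Rightarrow> nat)
   \<Rightarrow> (nat \<Rightarrow> 't \<Rightarrow> real) \<Rightarrow> real \<Rightarrow> real \<Rightarrow> ('t \<Rightarrow> 'w \<Rightarrow> real) \<Rightarrow> (nat \<Rightarrow> 't \<Rightarrow> real)
   \<Rightarrow> 'i \<Rightarrow> nat \<Rightarrow> real" where
  "CU M I T D tau V p r Theta prem i ch =
     (\<Sum>t\<in>T. prem ch t * D i t)
   + (\<Sum>t\<in>T. p * integral\<^sup>L M (\<lambda>w. served I D r Theta i t w))
   + (\<Sum>t\<in>T. integral\<^sup>L M (\<lambda>w. V (tau i) t * (D i t - served I D r Theta i t w)))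
   - (\<Sum>t\<in>T. integral\<^sup>L M (\<lambda>w. (V ch t - p) * (D i t - served I D r Theta i t w)))"

definition CU0 :: "'w measure \<Rightarrow> 'i set \<Rightarrow> 't set \<Rightarrow> ('i \<Rightarrow> 't \<Rightarrow> real) \<Rightarrow> ('i \<Rightarrow> nat)
   \<Rightarrow> (nat \<Rightarrow> 't \<Rightarrow> real) \<Rightarrow> real \<Rightarrow> real \<Rightarrow> ('t \<Rightarrow> 'w \<Rightarrow> real) \<Rightarrow> 'i \<Rightarrow> real" where
  "CU0 M I T D tau V p r Theta i =
     (\<Sum>t\<in>T. p * integral\<^sup>L M (\<lambda>w. served I D r Theta i t w))
   + (\<Sum>t\<in>T. integral\<^sup>L M (\<lambda>w. V (tau i) t * (D i t - served I D r Theta i t w)))"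

definition valid_contract :: "'w measure \<Rightarrow> 'i set \<Rightarrow> 't set \<Rightarrow> nat \<Rightarrow> ('i \<Rightarrow> 't \<Rightarrow> real) \<Rightarrow> ('i \<Rightarrow> nat)
   \<Rightarrow> (nat \<Rightarrow> 't \<Rightarrow> real) \<Rightarrow> real \<Rightarrow> real \<Rightarrow> ('t \<Rightarrow> 'w \<Rightarrow> real) \<Rightarrow> (nat \<Rightarrow> 't \<Rightarrow> real) \<Rightarrow> bool" where
  "valid_contract M I T K D tau V p r Theta prem \<longleftrightarrow>
     (\<forall>i\<in>I. CU M I T D tau V p r Theta prem i (tau i) \<le> CU0 M I T D tau V p r Theta i
          \<and> (\<forall>m\<in>{1..K}. CU M I T D tau V p r Theta prem i (tau i) \<le> CU M I T D tau V p r Theta prem i m))"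

definition premium_conditions :: "'w measure \<Rightarrow> 'i set \<Rightarrow> 't set \<Rightarrow> nat \<Rightarrow> ('i \<Rightarrow> 't \<Rightarrow> real)
   \<Rightarrow> (nat \<Rightarrow> 't \<Rightarrow> real) \<Rightarrow> real \<Rightarrow> real \<Rightarrow> ('t \<Rightarrow> 'w \<Rightarrow> real) \<Rightarrow> (nat \<Rightarrow> 't \<Rightarrow> real) \<Rightarrow> bool" where
  "premium_conditions M I T K D V p r Theta prem \<longleftrightarrow>
     (\<forall>t\<in>T. \<forall>m\<in>{1..K}. \<forall>k\<in>{1..K}.
        prem k t - prem m t = (V k t - V m t) *
          integral\<^sup>L M (\<lambda>w. 1 - renew_supply I D r Theta t w / Dagg I D t))
   \<and> (\<forall>t\<in>T. \<forall>k\<in>{1..K}. 0 \<le> prem k t \<and>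
        prem k t \<le> (V k t - p) *
          integral\<^sup>L M (\<lambda>w. 1 - renew_supply I D r Theta t w / Dagg I D t))"

end

theory Submission
  imports Defs
begin

text \<open>Since the renewable supply is shared in proportion to demand, the expected
  unserved energy of user i in period t is D i t * e t, where e t is the
  expected curtailment fraction. Hence
  CU i o = CU0 i + \<Sum>t. D i t * (prem o t - (V o t - p) * e t).
  The first premium condition makes the bracket independent of the item o, which
  gives incentive compatibility (even with equality), and the second makes it
  nonpositive, which gives individual rationality. The fees (V k t - p) * e t
  satisfy both conditions because e t \<ge> 0 and V k t \<ge> V 1 t \<ge> p.\<close>

definition expected_curtailment ::
    "'w measure \<Rightarrow> 'i set \<Rightarrow> ('i \<Rightarrow> 't \<Rightarrow> real) \<Rightarrow> real \<Rightarrow> ('t \<Rightarrow> 'w \<Rightarrow> real) \<Rightarrow> 't \<Rightarrow> real" where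
  "expected_curtailment M I D r Theta t =
     integral\<^sup>L M (\<lambda>w. 1 - renew_supply I D r Theta t w / Dagg I D t)"

lemma premium_conditions_iff:
  "premium_conditions M I T K D V p r Theta prem \<longleftrightarrow>
     (\<forall>t\<in>T. \<forall>m\<in>{1..K}. \<forall>k\<in>{1..K}.
        prem k t - prem m t = (V k t - V m t) * expected_curtailment M I D r Theta t)
   \<and> (\<forall>t\<in>T. \<forall>k\<in>{1..K}. 0 \<le> prem k t \<and>
        prem k t \<le> (V k t - p) * expected_curtailment M I D r Theta t)"
  by (simp add: premium_conditions_def expected_curtailment_def)

lemma expected_curtailment_nonneg:
  assumes "Dagg I D t > 0"
  shows "0 \<le> expected_curtailment M I D r Theta t"
proof -
  have "0 \<le> 1 - renew_supply I D r Theta t w / Dagg I D t" for w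
    using assms by (simp add: renew_supply_def field_simps)
  then show ?thesis
    unfolding expected_curtailment_def by (intro integral_nonneg_AE) auto
qed

lemma integral_unserved:
  assumes "Dagg I D t \<noteq> 0"
  shows "integral\<^sup>L M (\<lambda>w. c * (D i t - served I D r Theta i t w))
     = c * D i t * expected_curtailment M I D r Theta t"
proof -
  have "(\<lambda>w. c * (D i t - served I D r Theta i t w))
      = (\<lambda>w. c * D i t * (1 - renew_supply I D r Theta t w / Dagg I D t))"
    using assms by (auto simp: served_def right_diff_distrib)
  then show ?thesis by (simp add: expected_curtailment_def)
qed

lemma CU_eq_CU0_plus:
  assumes "\<forall>t\<in>T. Dagg I D t \<noteq> 0"
  shows "CU M I T D tau V p r Theta prem i ch
     = CU0 M I T D tau V p r Theta i
       + (\<Sum>t\<in>T. D i t * (prem ch t - (V ch t - p) * expected_curtailment M I D r Theta t))"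
proof -
  have refund: "(\<Sum>t\<in>T. integral\<^sup>L M (\<lambda>w. (V ch t - p) * (D i t - served I D r Theta i t w)))
      = (\<Sum>t\<in>T. (V ch t - p) * D i t * expected_curtailment M I D r Theta t)"
    using assms by (intro sum.cong refl integral_unserved) auto
  have "(\<Sum>t\<in>T. D i t * (prem ch t - (V ch t - p) * expected_curtailment M I D r Theta t))
      = (\<Sum>t\<in>T. prem ch t * D i t)
        - (\<Sum>t\<in>T. (V ch t - p) * D i t * expected_curtailment M I D r Theta t)"
    unfolding sum_subtractf[symmetric] by (rule sum.cong) (simp_all add: algebra_simps)
  then show ?thesis
    unfolding CU_def CU0_def refund by simp
qed

lemma CU_le_CU0:
  assumes "\<forall>t\<in>T. Dagg I D t \<noteq> 0" and "\<forall>t\<in>T. 0 \<le> D i t"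
    and "\<forall>t\<in>T. prem ch t \<le> (V ch t - p) * expected_curtailment M I D r Theta t"
  shows "CU M I T D tau V p r Theta prem i ch \<le> CU0 M I T D tau V p r Theta i"
proof -
  have "(\<Sum>t\<in>T. D i t * (prem ch t - (V ch t - p) * expected_curtailment M I D r Theta t)) \<le> 0"
    using assms(2,3) by (intro sum_nonpos) (simp add: mult_nonneg_nonpos)
  then show ?thesis
    by (simp add: CU_eq_CU0_plus[OF assms(1)])
qed

lemma CU_independent_of_item:
  assumes "\<forall>t\<in>T. Dagg I D t \<noteq> 0"
    and "\<forall>t\<in>T. prem k t - prem m t = (V k t - V m t) * expected_curtailment M I D r Theta t"
  shows "CU M I T D tau V p r Theta prem i k = CU M I T D tau V p r Theta prem i m"
proof -
  have "prem k t - (V k t - p) * expected_curtailment M I D r Theta t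
      = prem m t - (V m t - p) * expected_curtailment M I D r Theta t" if "t \<in> T" for t
    using assms(2) that by (simp add: algebra_simps)
  then show ?thesis
    by (simp add: CU_eq_CU0_plus[OF assms(1)])
qed

lemma premium_conditions_fair_premium:
  assumes "\<forall>t\<in>T. Dagg I D t > 0" and "\<forall>t\<in>T. p \<le> V 1 t"
    and "\<forall>t\<in>T. \<forall>k\<in>{1..K}. V 1 t \<le> V k t"
  shows "premium_conditions M I T K D V p r Theta
           (\<lambda>k t. (V k t - p) * expected_curtailment M I D r Theta t)"
  unfolding premium_conditions_iff
proof (intro conjI ballI)
  fix t m k
  show "(V k t - p) * expected_curtailment M I D r Theta t
      - (V m t - p) * expected_curtailment M I D r Theta t
      = (V k t - V m t) * expected_curtailment M I D r Theta t"
    by (simp add: algebra_simps)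
next
  fix t k assume t: "t \<in> T" and k: "k \<in> {1..K}"
  have "0 \<le> V k t - p"
    using assms(2,3) t k by fastforce
  moreover have "0 \<le> expected_curtailment M I D r Theta t"
    using assms(1) t by (simp add: expected_curtailment_nonneg)
  ultimately show "0 \<le> (V k t - p) * expected_curtailment M I D r Theta t"
    by simp
qed simp

theorem theorem1:
  fixes M :: "'w measure" and I :: "'i set" and T :: "'t set" and K :: nat
    and D :: "'i \<Rightarrow> 't \<Rightarrow> real" and tau :: "'i \<Rightarrow> nat"
    and V :: "nat \<Rightarrow> 't \<Rightarrow> real" and p r :: real
    and Theta :: "'t \<Rightarrow> 'w \<Rightarrow> real"
  assumes "prob_space M"
    and "finite I" and "finite T"
    and "\<forall>i\<in>I. tau i \<in> {1..K}"
    and "\<forall>i\<in>I. \<forall>t\<in>T. 0 \<le> D i t"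
    and "\<forall>t\<in>T. \<forall>k\<in>{1..K}. \<forall>k'\<in>{1..K}. k \<le> k' \<longrightarrow> V k t \<le> V k' t"
    and "\<forall>t\<in>T. Dagg I D t > 0"
    and "r \<ge> 0"
    and "\<forall>t\<in>T. Theta t \<in> borel_measurable M"
    and "\<forall>t\<in>T. AE w in M. 0 \<le> Theta t w \<and> Theta t w \<le> 1"
    and "\<forall>t\<in>T. p \<le> V 1 t"
  shows "(\<forall>prem. premium_conditions M I T K D V p r Theta prem
              \<longrightarrow> valid_contract M I T K D tau V p r Theta prem)
       \<and> (\<exists>prem. premium_conditions M I T K D V p r Theta prem)"
proof (intro conjI allI impI exI)
  have Dagg_nonzero: "\<forall>t\<in>T. Dagg I D t \<noteq> 0"
    using assms(7) by auto
  fix prem assume "premium_conditions M I T K D V p r Theta prem"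
  then have differences: "\<forall>t\<in>T. \<forall>m\<in>{1..K}. \<forall>k\<in>{1..K}.
      prem k t - prem m t = (V k t - V m t) * expected_curtailment M I D r Theta t"
    and bounds: "\<forall>t\<in>T. \<forall>k\<in>{1..K}. prem k t \<le> (V k t - p) * expected_curtailment M I D r Theta t"
    by (simp_all add: premium_conditions_iff)
  show "valid_contract M I T K D tau V p r Theta prem"
    unfolding valid_contract_def
  proof (intro ballI conjI)
    fix i assume "i \<in> I"
    then have k: "tau i \<in> {1..K}" and "\<forall>t\<in>T. 0 \<le> D i t"
      using assms(4,5) by auto
    with bounds show "CU M I T D tau V p r Theta prem i (tau i) \<le> CU0 M I T D tau V p r Theta i"
      by (intro CU_le_CU0[OF Dagg_nonzero]) auto
    fix m assume "m \<in> {1..K}"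
    with differences k have "\<forall>t\<in>T. prem (tau i) t - prem m t
        = (V (tau i) t - V m t) * expected_curtailment M I D r Theta t"
      by blast
    then show "CU M I T D tau V p r Theta prem i (tau i) \<le> CU M I T D tau V p r Theta prem i m"
      by (simp add: CU_independent_of_item[OF Dagg_nonzero])
  qed
next
  have V_ge_V1: "\<forall>t\<in>T. \<forall>k\<in>{1..K}. V 1 t \<le> V k t"
    using assms(6) by auto
  show "premium_conditions M I T K D V p r Theta
          (\<lambda>k t. (V k t - p) * expected_curtailment M I D r Theta t)"
    by (rule premium_conditions_fair_premium[OF assms(7,11) V_ge_V1])
qed

end
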